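(* Let $S$ be a set and let $f:2^S\to 2^S$ be monotonic with respect to $\subseteq$. Then: (1) $(\nu f,\ \nu f\times\nu f)$ is a support ordering for $f$; (2) there is a well-ordering ${\prec}\subseteq \mu f\times\mu f$ such that $(\mu f,\prec)$ is a support ordering for $f$.
   Context: The Axiom of Choice is assumed. $\mu f$ and $\nu f$ are the least and greatest fixpoints of $f$ in $(2^S,\subseteq)$. For a binary relation ${\prec}$ on $X$ and $x\in X$, $\prec^{-1}(x)=\{x'\in X\mid x'\prec x\}$. A pair $(X,\prec)$ is a support ordering for $f$ if $X\subseteq S$, ${\prec}\subseteq X\times X$, and $x\in f(\prec^{-1}(x))$ for every $x\in X$. A relation $R$ on $X$ is well-founded if every nonempty $Y\subseteq X$ has an element $y$ such that no $y'\in Y$, $y'\neq y$, satisfies $y' R y$; $R$ is a (strict) total order if it is irreflexive, transitive and any two distinct elements are comparable; a well-ordering is a well-founded total order. *)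

theory Defs
  imports Main
begin

definition mu_fp :: "'a set \<Rightarrow> ('a set \<Rightarrow> 'a set) \<Rightarrow> 'a set" where
  "mu_fp S f = \<Inter> {A. A \<subseteq> S \<and> f A \<subseteq> A}"

definition nu_fp :: "'a set \<Rightarrow> ('a set \<Rightarrow> 'a set) \<Rightarrow> 'a set" where
  "nu_fp S f = \<Union> {A. A \<subseteq> S \<and> A \<subseteq> f A}"

definition pred_set :: "'a rel \<Rightarrow> 'a \<Rightarrow> 'a set" where
  "pred_set R x = {x'. (x', x) \<in> R}"

definition support_ordering :: "'a set \<Rightarrow> ('a set \<Rightarrow> 'a set) \<Rightarrow> 'a set \<Rightarrow> 'a rel \<Rightarrow> bool" where
  "support_ordering S f X R \<longleftrightarrow> X \<subseteq> S \<and> R \<subseteq> X \<times> X \<and> (\<forall>x\<in>X. x \<in> f (pred_set R x))"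

definition well_founded_on :: "'a set \<Rightarrow> 'a rel \<Rightarrow> bool" where
  "well_founded_on X R \<longleftrightarrow>
     (\<forall>Y. Y \<subseteq> X \<and> Y \<noteq> {} \<longrightarrow> (\<exists>y\<in>Y. \<forall>y'\<in>Y. y' \<noteq> y \<longrightarrow> (y', y) \<notin> R))"

definition strict_total_order_on :: "'a set \<Rightarrow> 'a rel \<Rightarrow> bool" where
  "strict_total_order_on X R \<longleftrightarrow>
     (\<forall>x\<in>X. (x, x) \<notin> R) \<and>
     (\<forall>x\<in>X. \<forall>y\<in>X. \<forall>z\<in>X. (x, y) \<in> R \<and> (y, z) \<in> R \<longrightarrow> (x, z) \<in> R) \<and>
     (\<forall>x\<in>X. \<forall>y\<in>X. x \<noteq> y \<longrightarrow> (x, y) \<in> R \<or> (y, x) \<in> R)"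

definition well_ordering_on :: "'a set \<Rightarrow> 'a rel \<Rightarrow> bool" where
  "well_ordering_on X R \<longleftrightarrow> well_founded_on X R \<and> strict_total_order_on X R"

end

theory Submission
  imports Defs
begin

(* Every element of the post-fixpoint nu f lies in f (nu f), so the full relation on nu f is a
   support ordering.  A well-founded support ordering (X, R) satisfies X \<subseteq> mu f, by induction
   along R.  Conversely, Zorn's lemma applied to the well-orders that are support orderings,
   compared by the initial-segment relation, yields a maximal one, m; if some x \<in> f (Field m)
   were outside Field m, putting x on top of m would contradict maximality.  So Field m is a
   pre-fixpoint of f, contains mu f, and hence equals mu f. *)

lemma Well_order_Union_chain:
  assumes chain: "R \<in> Chains init_seg_of" and wo: "\<forall>r\<in>R. Well_order r"
  shows "Well_order (\<Union>R)"
proof -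
  have subch: "chain\<^sub>\<subseteq> R"
    using chain by (auto simp: init_seg_of_def chain_subset_def Chains_def)
  have "\<forall>r\<in>R. Refl r" "\<forall>r\<in>R. trans r" "\<forall>r\<in>R. antisym r" "\<forall>r\<in>R. Total r"
    "\<forall>r\<in>R. wf (r - Id)"
    using wo by (simp_all add: order_on_defs)
  have "\<Union>R \<subseteq> Field (\<Union>R) \<times> Field (\<Union>R)"
    unfolding Field_def by auto
  moreover have "Refl (\<Union>R)"
    using \<open>\<forall>r\<in>R. Refl r\<close> unfolding refl_on_def by fastforce
  moreover have "trans (\<Union>R)"
    using chain_subset_trans_Union[OF subch] \<open>\<forall>r\<in>R. trans r\<close> .
  moreover have "antisym (\<Union>R)"
    using chain_subset_antisym_Union[OF subch] \<open>\<forall>r\<in>R. antisym r\<close> .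
  moreover have "Total (\<Union>R)"
    using chain_subset_Total_Union[OF subch] \<open>\<forall>r\<in>R. Total r\<close> .
  moreover have "wf (\<Union>R - Id)"
  proof -
    have "\<Union>R - Id = \<Union>{r - Id | r. r \<in> R}"
      by blast
    then show ?thesis
      using wf_Union_wf_init_segs[OF Chains_inits_DiffI[OF chain]] \<open>\<forall>r\<in>R. wf (r - Id)\<close>
      by fastforce
  qed
  ultimately show ?thesis
    by (simp add: order_on_defs)
qed

lemma Well_order_insert_top:
  assumes "Well_order r" and x: "x \<notin> Field r"
  shows "Well_order (insert (x, x) r \<union> Field r \<times> {x})" (is "Well_order ?r")
proof -
  have "Refl r" "trans r" "antisym r" "Total r" "wf (r - Id)" "r \<subseteq> Field r \<times> Field r"
    using \<open>Well_order r\<close> by (simp_all add: order_on_defs)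
  have Field_r: "Field ?r = insert x (Field r)"
    by (auto simp: Field_def)
  have "?r \<subseteq> Field ?r \<times> Field ?r"
    using \<open>r \<subseteq> Field r \<times> Field r\<close> by auto
  moreover have "Refl ?r"
    using \<open>Refl r\<close> Field_r unfolding refl_on_def by blast
  moreover have "trans ?r"
    using \<open>trans r\<close> x unfolding trans_def Field_def by blast
  moreover have "antisym ?r"
    using \<open>antisym r\<close> x unfolding antisym_def Field_def by blast
  moreover have "Total ?r"
    using \<open>Total r\<close> Field_r by (auto simp: total_on_def)
  moreover have "wf (?r - Id)"
  proof -
    have "Field r \<times> {x} \<subseteq> measure (\<lambda>y. if y = x then 1 else 0)"
      using x by auto
    then have "wf (Field r \<times> {x})"
      using wf_subset by blast
    then show ?thesis
      using \<open>wf (r - Id)\<close> x by (auto simp: Un_Diff Field_def intro: wf_Un wf_subset)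
  qed
  ultimately show ?thesis
    by (simp add: order_on_defs)
qed

lemma well_ordering_on_Diff_Id:
  assumes "Well_order r"
  shows "well_ordering_on (Field r) (r - Id)"
proof -
  have "trans r" "antisym r" "Total r" "wf (r - Id)"
    using assms by (simp_all add: order_on_defs)
  have "well_founded_on (Field r) (r - Id)"
    unfolding well_founded_on_def
  proof (intro allI impI)
    fix Y assume "Y \<subseteq> Field r \<and> Y \<noteq> {}"
    then obtain y where "y \<in> Y" "\<forall>y'. (y', y) \<in> r - Id \<longrightarrow> y' \<notin> Y"
      using \<open>wf (r - Id)\<close> unfolding wf_eq_minimal by blast
    then show "\<exists>y\<in>Y. \<forall>y'\<in>Y. y' \<noteq> y \<longrightarrow> (y', y) \<notin> r - Id"
      by blast
  qed
  moreover have "strict_total_order_on (Field r) (r - Id)"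
    using \<open>trans r\<close> \<open>antisym r\<close> \<open>Total r\<close>
    unfolding strict_total_order_on_def trans_def antisym_def total_on_def by blast
  ultimately show ?thesis
    unfolding well_ordering_on_def ..
qed

lemma pred_set_mono: "R \<subseteq> R' \<Longrightarrow> pred_set R x \<subseteq> pred_set R' x"
  unfolding pred_set_def by blast

lemma nu_fp_subset: "nu_fp S f \<subseteq> S"
  unfolding nu_fp_def by blast

lemma mu_fp_lower_bound: "A \<subseteq> S \<Longrightarrow> f A \<subseteq> A \<Longrightarrow> mu_fp S f \<subseteq> A"
  unfolding mu_fp_def by blast

definition support_well_order :: "'a set \<Rightarrow> ('a set \<Rightarrow> 'a set) \<Rightarrow> 'a rel \<Rightarrow> bool" where
  "support_well_order S f r \<longleftrightarrow> Well_order r \<and> support_ordering S f (Field r) (r - Id)"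

lemma support_well_order_iff:
  "support_well_order S f r \<longleftrightarrow>
     Well_order r \<and> Field r \<subseteq> S \<and> (\<forall>x\<in>Field r. x \<in> f (pred_set (r - Id) x))"
  unfolding support_well_order_def support_ordering_def by (auto intro: FieldI1 FieldI2)

locale monotone_set_operator =
  fixes S :: "'a set" and f :: "'a set \<Rightarrow> 'a set"
  assumes maps: "\<And>A. A \<subseteq> S \<Longrightarrow> f A \<subseteq> S"
    and mono: "\<And>A B. A \<subseteq> B \<Longrightarrow> B \<subseteq> S \<Longrightarrow> f A \<subseteq> f B"
begin

lemma nu_fp_subset_image: "nu_fp S f \<subseteq> f (nu_fp S f)"
proof
  fix x assume "x \<in> nu_fp S f"
  then obtain A where A: "A \<subseteq> S" "A \<subseteq> f A" "x \<in> A"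
    unfolding nu_fp_def by blast
  then have "A \<subseteq> nu_fp S f"
    unfolding nu_fp_def by blast
  then have "f A \<subseteq> f (nu_fp S f)"
    by (rule mono[OF _ nu_fp_subset])
  with A show "x \<in> f (nu_fp S f)"
    by blast
qed

lemma support_ordering_nu_fp: "support_ordering S f (nu_fp S f) (nu_fp S f \<times> nu_fp S f)"
proof -
  have "pred_set (nu_fp S f \<times> nu_fp S f) x = nu_fp S f" if "x \<in> nu_fp S f" for x
    using that unfolding pred_set_def by blast
  then show ?thesis
    using nu_fp_subset[of S f] nu_fp_subset_image unfolding support_ordering_def by auto
qed

lemma mu_fp_subset: "mu_fp S f \<subseteq> S"
  by (rule mu_fp_lower_bound) (rule subset_refl, rule maps, rule subset_refl)

lemma image_mu_fp_subset: "f (mu_fp S f) \<subseteq> mu_fp S f"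
proof -
  have "f (mu_fp S f) \<subseteq> A" if "A \<subseteq> S" "f A \<subseteq> A" for A
    using mono[OF mu_fp_lower_bound[of A S f, OF that] that(1)] that(2) by blast
  then show ?thesis
    unfolding mu_fp_def by blast
qed

lemma wf_support_ordering_subset_mu_fp:
  assumes "wf R" and supp: "support_ordering S f X R"
  shows "X \<subseteq> mu_fp S f"
proof -
  have "x \<in> X \<longrightarrow> x \<in> mu_fp S f" for x
    using \<open>wf R\<close>
  proof (induction x rule: wf_induct_rule)
    case (less x)
    show ?case
    proof
      assume "x \<in> X"
      have "pred_set R x \<subseteq> mu_fp S f"
        using less supp unfolding support_ordering_def pred_set_def by blast
      then have "f (pred_set R x) \<subseteq> f (mu_fp S f)"
        by (rule mono[OF _ mu_fp_subset])
      with \<open>x \<in> X\<close> supp image_mu_fp_subset show "x \<in> mu_fp S f"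
        unfolding support_ordering_def by blast
    qed
  qed
  then show ?thesis
    by blast
qed

lemma support_well_order_Union_chain:
  assumes chain: "R \<in> Chains init_seg_of" and supp: "\<forall>r\<in>R. support_well_order S f r"
  shows "support_well_order S f (\<Union>R)"
proof -
  have Field_S: "Field (\<Union>R) \<subseteq> S"
    using supp unfolding support_well_order_iff Field_def by blast
  have "x \<in> f (pred_set (\<Union>R - Id) x)" if x: "x \<in> Field (\<Union>R)" for x
  proof -
    obtain r where "r \<in> R" "x \<in> Field r"
      using x by auto
    have "pred_set (\<Union>R - Id) x \<subseteq> S"
      using Field_S unfolding pred_set_def by (auto intro: FieldI1)
    then have "f (pred_set (r - Id) x) \<subseteq> f (pred_set (\<Union>R - Id) x)"
      using \<open>r \<in> R\<close> by (intro mono pred_set_mono) blast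
    moreover have "x \<in> f (pred_set (r - Id) x)"
      using supp \<open>r \<in> R\<close> \<open>x \<in> Field r\<close> unfolding support_well_order_iff by blast
    ultimately show ?thesis
      by blast
  qed
  with Field_S Well_order_Union_chain[OF chain] supp show ?thesis
    unfolding support_well_order_iff by blast
qed

lemma support_well_order_insert_top:
  assumes supp: "support_well_order S f r" and x: "x \<notin> Field r" "x \<in> f (Field r)"
  shows "support_well_order S f (insert (x, x) r \<union> Field r \<times> {x})"
    (is "support_well_order S f ?r")
proof -
  have Field_r: "Field ?r = insert x (Field r)"
    by (auto simp: Field_def)
  have "Field r \<subseteq> S"
    using supp unfolding support_well_order_iff by blast
  then have Field_S: "Field ?r \<subseteq> S"
    unfolding Field_r using maps[OF \<open>Field r \<subseteq> S\<close>] x(2) by blast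
  have "z \<in> f (pred_set (?r - Id) z)" if "z \<in> Field ?r" for z
  proof (cases "z = x")
    case True
    then have "pred_set (?r - Id) z = Field r"
      using x(1) by (auto simp: pred_set_def intro: FieldI1)
    with True x(2) show ?thesis
      by simp
  next
    case False
    have "pred_set (?r - Id) z \<subseteq> S"
      using Field_S unfolding pred_set_def by (auto intro: FieldI1)
    then have "f (pred_set (r - Id) z) \<subseteq> f (pred_set (?r - Id) z)"
      by (intro mono pred_set_mono) blast
    moreover have "z \<in> f (pred_set (r - Id) z)"
      using False that Field_r supp unfolding support_well_order_iff by blast
    ultimately show ?thesis
      by blast
  qed
  with Field_S Well_order_insert_top[OF _ x(1)] supp show ?thesis
    unfolding support_well_order_iff by blast
qed

lemma exists_support_well_order_closed:
  "\<exists>m. support_well_order S f m \<and> f (Field m) \<subseteq> Field m"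
proof -
  let ?A = "{r. support_well_order S f r}"
  let ?I = "relation_of (\<lambda>r s. r initial_segment_of s) ?A"
  have po: "partial_order_on ?A ?I"
    by (rule partial_order_on_relation_ofI) (simp, metis trans_init_seg_of, metis antisym_init_seg_of)
  have chain_bound: "\<exists>u\<in>?A. \<forall>r\<in>C. r initial_segment_of u" if C: "C \<in> Chains ?I" for C
  proof -
    have chain: "C \<in> Chains init_seg_of"
      using C mono_Chains[of ?I init_seg_of] by (auto simp: relation_of_def)
    moreover have "\<forall>r\<in>C. support_well_order S f r"
      using C by (auto simp: Chains_def relation_of_def)
    ultimately have "support_well_order S f (\<Union>C)"
      by (rule support_well_order_Union_chain)
    with Chains_init_seg_of_Union[OF chain] show ?thesis
      by blast
  qed
  obtain m where m: "support_well_order S f m"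
    and max: "\<And>r. support_well_order S f r \<Longrightarrow> m initial_segment_of r \<Longrightarrow> r = m"
    using predicate_Zorn[OF po chain_bound] by blast
  have "x \<in> Field m" if x: "x \<in> f (Field m)" for x
  proof (rule ccontr)
    assume "x \<notin> Field m"
    let ?m = "insert (x, x) m \<union> Field m \<times> {x}"
    have "m initial_segment_of ?m"
      using \<open>x \<notin> Field m\<close> by (auto simp: init_seg_of_def Field_def)
    then have "?m = m"
      by (rule max[OF support_well_order_insert_top[OF m \<open>x \<notin> Field m\<close> x]])
    with \<open>x \<notin> Field m\<close> show False
      by (auto simp: Field_def)
  qed
  with m show ?thesis
    by blast
qed

lemma exists_well_ordering_support_ordering_mu_fp:
  "\<exists>R. R \<subseteq> mu_fp S f \<times> mu_fp S f \<and> well_ordering_on (mu_fp S f) R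
     \<and> support_ordering S f (mu_fp S f) R"
proof -
  obtain m where m: "support_well_order S f m" and closed: "f (Field m) \<subseteq> Field m"
    using exists_support_well_order_closed by blast
  then have wo: "Well_order m" and supp: "support_ordering S f (Field m) (m - Id)"
    unfolding support_well_order_def by blast+
  have "Field m = mu_fp S f"
  proof
    show "Field m \<subseteq> mu_fp S f"
      using wf_support_ordering_subset_mu_fp[OF _ supp] wo by (simp add: order_on_defs)
    show "mu_fp S f \<subseteq> Field m"
      using mu_fp_lower_bound[of "Field m" S f] closed supp
      unfolding support_ordering_def by blast
  qed
  with supp well_ordering_on_Diff_Id[OF wo] show ?thesis
    unfolding support_ordering_def by (intro exI[of _ "m - Id"]) auto
qed

end

theorem corollary3:
  fixes S :: "'a set" and f :: "'a set \<Rightarrow> 'a set"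
  assumes maps: "\<And>A. A \<subseteq> S \<Longrightarrow> f A \<subseteq> S"
    and mono: "\<And>A B. A \<subseteq> B \<Longrightarrow> B \<subseteq> S \<Longrightarrow> f A \<subseteq> f B"
  shows "support_ordering S f (nu_fp S f) (nu_fp S f \<times> nu_fp S f)
         \<and> (\<exists>R. R \<subseteq> mu_fp S f \<times> mu_fp S f \<and> well_ordering_on (mu_fp S f) R
              \<and> support_ordering S f (mu_fp S f) R)"
proof -
  interpret monotone_set_operator S f
    using maps mono by unfold_locales
  show ?thesis
    using support_ordering_nu_fp exists_well_ordering_support_ordering_mu_fp by blast
qed

end
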